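(* Let $t_0\overset{i_1}{-}t_1\overset{i_2}{-}\cdots\overset{i_k}{-}t_k$ be a path in $\mathbb T_n$. For $1\le i\le k$ and $i\le m\le k$, $$q_{t_i}^{t_0}(\hat{\mathbf y}^{\mathbf c_m^+})=\hat{\mathbf y}^{\mathbf c_m^+}\prod_{j=1}^{i}L_j^{-(\hat{\mathbf c}_m^+,\,d_{(j)}\mathbf c_j)_{D_0R}},$$ where $q_{t_i}^{t_0}=q_{i_1;t_0}\circ q_{i_2;t_1}\circ\cdots\circ q_{i_i;t_{i-1}}$.
   Context: Notation: $n\ge1$; $[b]_+=\max(b,0)$. $\mathbb T_n$: $n$-regular tree with edges labeled $1,\dots,n$, distinct labels at each vertex; $t\overset{k}{-}t'$ an edge labeled $k$; $t_0$ root. Positive integers $r_1,\dots,r_n$, $R=\mathrm{diag}(r_i)$. Formal variables $y_1,\dots,y_n$, $z_{i,s}$ ($1\le s\le r_i-1$), $z_{i,s}=z_{i,r_i-s}$, $z_{i,0}=z_{i,r_i}=1$; $\mathbb P=\mathrm{Trop}(\mathbf y,\mathbf z)$; $\mathbb{QP}$ fraction field of $\mathbb{ZP}$; $\mathbb{QP}(\mathbf x)$ rational functions in $x_1,\dots,x_n$ over $\mathbb{QP}$. $B=(b_{ij})$ skew-symmetrizable integer; $\hat y_i=y_i\prod_jx_j^{b_{ji}}$, $\hat{\mathbf y}^{\mathbf a}=\prod\hat y_i^{a_i}$, $\mathbf x^{\mathbf m}=\prod x_i^{m_i}$. Matrices: $B_{t_0}=B$, $C_{t_0}=I_n$; for $t\overset{k}{-}t'$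 ($\varepsilon=\pm1$, independent): $b_{ij;t'}=-b_{ij;t}$ if $i=k$ or $j=k$, else $b_{ij;t}+r_k([-\varepsilon b_{ik;t}]_+b_{kj;t}+b_{ik;t}[\varepsilon b_{kj;t}]_+)$; $c_{ij;t'}=-c_{ij;t}$ if $j=k$, else $c_{ij;t}+r_k(c_{ik;t}[\varepsilon b_{kj;t}]_++[-\varepsilon c_{ik;t}]_+b_{kj;t})$. The columns $\mathbf c_{k;t}$ of $C_t$ are sign-coherent with sign $\varepsilon_{k;t}$, $\mathbf c_{k;t}^+=\varepsilon_{k;t}\mathbf c_{k;t}$. Form: $D_0$ positive integer diagonal with $D_0RB$ skew-symmetric, $D_0R=\mathrm{diag}(d_1^{-1},\dots,d_n^{-1})$, $(\mathbf u,\mathbf v)_{D_0R}=\mathbf u^TD_0R\mathbf v$. Maps: $q_{k;t}$ is the field automorphism of $\mathbb{QP}(\mathbf x)$ over $\mathbb{QP}$ with $\mathbf x^{\mathbf m}\mapsto\mathbf x^{\mathbf m}(\sum_{s=0}^{r_k}z_{k,s}(\hat{\mathbf y}^{\mathbf c_{k;t}^+})^s)^{-(\mathbf m,d_k\mathbf c_{k;t})_{D_0R}}$. Path data: $d_{(j)}=d_{i_j}$, $r_{(j)}=r_{i_j}$, $\mathbf c_j=\mathbf c_{i_j;t_{j-1}}$, $\mathbf c_j^+=\varepsilon_{i_j;t_{j-1}}\mathbf c_j$, $\hat{\mathbf c}_j^+=B\mathbf c_j^+$. $L_1=\sum_{s=0}^{r_{(1)}}z_{i_1,s}(\hat{\mathbf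 y}^{\mathbf c_1^+})^s$; for $2\le l\le k$, $L_l=\sum_{s=0}^{r_{(l)}}z_{i_l,s}\big(\hat{\mathbf y}^{\mathbf c_l^+}\prod_{j=1}^{l-1}L_j^{-(\hat{\mathbf c}_l^+,d_{(j)}\mathbf c_j)_{D_0R}}\big)^s$. *)

theory Defs
  imports Complex_Main
begin

text \<open>Indices of vertices/variables are 0-based: 0,...,n-1.
  Integer vectors are functions nat => int (only entries below n matter),
  integer matrices are functions nat => nat => int (entry (i,j)).
  A path t_0 -i_1- t_1 - ... -i_k- t_k is given by the label sequence ii 1, ..., ii k.\<close>

definition pos :: "int \<Rightarrow> int" where
  "pos b = max b 0"

text \<open>Matrix mutation in direction k (with epsilon = 1; the result is independent of epsilon).\<close>
definition mutB :: "(nat \<Rightarrow> nat) \<Rightarrow> nat \<Rightarrow> (nat \<Rightarrow> nat \<Rightarrow> int) \<Rightarrow> (nat \<Rightarrow> nat \<Rightarrow> int)" where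
  "mutB r k B = (\<lambda>i j. if i = k \<or> j = k then - B i j
      else B i j + int (r k) * (pos (- B i k) * B k j + B i k * pos (B k j)))"

definition mutC :: "(nat \<Rightarrow> nat) \<Rightarrow> nat \<Rightarrow> (nat \<Rightarrow> nat \<Rightarrow> int) \<Rightarrow> (nat \<Rightarrow> nat \<Rightarrow> int)
    \<Rightarrow> (nat \<Rightarrow> nat \<Rightarrow> int)" where
  "mutC r k B C = (\<lambda>i j. if j = k then - C i j
      else C i j + int (r k) * (C i k * pos (B k j) + pos (- C i k) * B k j))"

fun BC :: "(nat \<Rightarrow> nat) \<Rightarrow> (nat \<Rightarrow> nat \<Rightarrow> int) \<Rightarrow> (nat \<Rightarrow> nat) \<Rightarrow> nat
    \<Rightarrow> (nat \<Rightarrow> nat \<Rightarrow> int) \<times> (nat \<Rightarrow> nat \<Rightarrow> int)" where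
  "BC r B ii 0 = (B, (\<lambda>i j. if i = j then 1 else 0))"
| "BC r B ii (Suc j) = (let Bt = fst (BC r B ii j); Ct = snd (BC r B ii j); k = ii (Suc j)
      in (mutB r k Bt, mutC r k Bt Ct))"

definition cvec :: "(nat \<Rightarrow> nat) \<Rightarrow> (nat \<Rightarrow> nat \<Rightarrow> int) \<Rightarrow> (nat \<Rightarrow> nat) \<Rightarrow> nat \<Rightarrow> (nat \<Rightarrow> int)" where
  "cvec r B ii j = (\<lambda>i. snd (BC r B ii (j - 1)) i (ii j))"

definition sgnv :: "nat \<Rightarrow> (nat \<Rightarrow> int) \<Rightarrow> int" where
  "sgnv n c = (if \<forall>i<n. 0 \<le> c i then 1 else -1)"

definition cplus :: "nat \<Rightarrow> (nat \<Rightarrow> nat) \<Rightarrow> (nat \<Rightarrow> nat \<Rightarrow> int) \<Rightarrow> (nat \<Rightarrow> nat) \<Rightarrow> nat \<Rightarrow> (nat \<Rightarrow> int)" where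
  "cplus n r B ii j = (\<lambda>i. sgnv n (cvec r B ii j) * cvec r B ii j i)"

definition matvec :: "nat \<Rightarrow> (nat \<Rightarrow> nat \<Rightarrow> int) \<Rightarrow> (nat \<Rightarrow> int) \<Rightarrow> (nat \<Rightarrow> int)" where
  "matvec n B a = (\<lambda>i. \<Sum>l<n. B i l * a l)"

text \<open>(u, d_k v)_{D_0 R} = u^T D_0 R (d_k v) with d_k = 1/(D_0 k * r k).\<close>
definition pairing :: "nat \<Rightarrow> (nat \<Rightarrow> int) \<Rightarrow> (nat \<Rightarrow> nat) \<Rightarrow> (nat \<Rightarrow> int) \<Rightarrow> nat \<Rightarrow> (nat \<Rightarrow> int) \<Rightarrow> rat" where
  "pairing n D0 r u k v =
     (\<Sum>i<n. of_int (u i * D0 i * int (r i) * v i)) / of_int (D0 k * int (r k))"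

text \<open>Integer value of the pairing (it is an integer in all uses; floor is only a type coercion).\<close>
definition ipair :: "nat \<Rightarrow> (nat \<Rightarrow> int) \<Rightarrow> (nat \<Rightarrow> nat) \<Rightarrow> (nat \<Rightarrow> int) \<Rightarrow> nat \<Rightarrow> (nat \<Rightarrow> int) \<Rightarrow> int" where
  "ipair n D0 r u k v = \<lfloor>pairing n D0 r u k v\<rfloor>"

definition xmon :: "nat \<Rightarrow> (nat \<Rightarrow> 'a::field) \<Rightarrow> (nat \<Rightarrow> int) \<Rightarrow> 'a" where
  "xmon n x m = (\<Prod>i<n. x i powi m i)"

definition yhat :: "nat \<Rightarrow> (nat \<Rightarrow> nat \<Rightarrow> int) \<Rightarrow> (nat \<Rightarrow> 'a::field) \<Rightarrow> (nat \<Rightarrow> 'a) \<Rightarrow> (nat \<Rightarrow> int) \<Rightarrow> 'a" where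
  "yhat n B x y a = (\<Prod>i<n. (y i * (\<Prod>j<n. x j powi B j i)) powi a i)"

fun Lseq :: "nat \<Rightarrow> (nat \<Rightarrow> nat) \<Rightarrow> (nat \<Rightarrow> nat \<Rightarrow> int) \<Rightarrow> (nat \<Rightarrow> int) \<Rightarrow> (nat \<Rightarrow> 'a::field)
    \<Rightarrow> (nat \<Rightarrow> 'a) \<Rightarrow> (nat \<Rightarrow> nat \<Rightarrow> 'a) \<Rightarrow> (nat \<Rightarrow> nat) \<Rightarrow> nat \<Rightarrow> 'a list" where
  "Lseq n r B D0 x y z ii 0 = []"
| "Lseq n r B D0 x y z ii (Suc l) =
     (let Ls = Lseq n r B D0 x y z ii l in
      Ls @ [\<Sum>s = 0..r (ii (Suc l)). z (ii (Suc l)) s *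
              (yhat n B x y (cplus n r B ii (Suc l)) *
               (\<Prod>j\<in>{1..l}. (Ls ! (j - 1)) powi
                  (- ipair n D0 r (matvec n B (cplus n r B ii (Suc l))) (ii j) (cvec r B ii j)))) ^ s])"

definition Lval :: "nat \<Rightarrow> (nat \<Rightarrow> nat) \<Rightarrow> (nat \<Rightarrow> nat \<Rightarrow> int) \<Rightarrow> (nat \<Rightarrow> int) \<Rightarrow> (nat \<Rightarrow> 'a::field)
    \<Rightarrow> (nat \<Rightarrow> 'a) \<Rightarrow> (nat \<Rightarrow> nat \<Rightarrow> 'a) \<Rightarrow> (nat \<Rightarrow> nat) \<Rightarrow> nat \<Rightarrow> 'a" where
  "Lval n r B D0 x y z ii l = Lseq n r B D0 x y z ii l ! (l - 1)"

text \<open>q^{t_0}_{t_i} = q 1 o q 2 o ... o q i, where q j stands for q_{i_j; t_{j-1}}.\<close>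
fun qcomp :: "(nat \<Rightarrow> 'a \<Rightarrow> 'a) \<Rightarrow> nat \<Rightarrow> 'a \<Rightarrow> 'a" where
  "qcomp q 0 = id"
| "qcomp q (Suc i) = qcomp q i \<circ> q (Suc i)"

end

theory Submission
  imports Defs
begin

text \<open>Every \<open>q\<^sub>j\<close> fixes \<open>y\<close> and \<open>z\<close>, so on a monomial \<open>hat y\<^sup>a = y\<^sup>a x\<^sup>B\<^sup>a\<close> it acts only
  through \<open>x\<^sup>B\<^sup>a\<close>, multiplying \<open>hat y\<^sup>a\<close> by a power of
  \<open>P\<^sub>j = \<Sum>\<^sub>s z(i\<^sub>j, s) (hat y\<^sup>c\<^sup>j\<^sup>+)\<^sup>s\<close>. Write \<open>Q\<^sub>i = q\<^sup>t\<^sup>0\<^sub>t\<^sub>i = Q\<^sub>i\<^sub>-\<^sub>1 \<circ> q\<^sub>i\<close>. Being a field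
  endomorphism fixing \<open>z\<close>, \<open>Q\<^sub>i\<^sub>-\<^sub>1\<close> sends \<open>P\<^sub>i\<close> to the same polynomial evaluated at
  \<open>Q\<^sub>i\<^sub>-\<^sub>1(hat y\<^sup>c\<^sup>i\<^sup>+)\<close>; by induction (the case \<open>m = i\<close>) this is exactly \<open>L\<^sub>i\<close>, which is why
  the \<open>L\<^sub>j\<close> are defined recursively.\<close>

locale field_endo =
  fixes f :: "'a::field \<Rightarrow> 'a"
  assumes map_add: "f (a + b) = f a + f b"
    and map_mult: "f (a * b) = f a * f b"
    and map_one: "f 1 = 1"
begin

lemma map_zero: "f 0 = 0"
  using map_add[of 0 0] by (metis add_cancel_right_right add_0)

lemma map_inverse: "f (inverse a) = inverse (f a)"
proof (cases "a = 0")
  case True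
  then show ?thesis by (simp add: map_zero)
next
  case False
  then have "f a * f (inverse a) = 1"
    by (simp flip: map_mult add: map_one)
  then show ?thesis by (rule inverse_unique[symmetric])
qed

lemma map_power: "f (a ^ m) = f a ^ m"
  by (induction m) (simp_all add: map_one map_mult)

lemma map_power_int: "f (a powi m) = f a powi m"
  by (simp add: power_int_def map_power map_inverse)

lemma map_sum: "f (sum g A) = (\<Sum>x\<in>A. f (g x))"
  by (induction A rule: infinite_finite_induct) (simp_all add: map_zero map_add)

lemma map_prod: "f (prod g A) = (\<Prod>x\<in>A. f (g x))"
  by (induction A rule: infinite_finite_induct) (simp_all add: map_one map_mult)

end

lemma field_endo_id: "field_endo id"
  by unfold_locales simp_all

lemma field_endo_comp: "field_endo f \<Longrightarrow> field_endo g \<Longrightarrow> field_endo (f \<circ> g)"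
  by (simp add: field_endo_def)

lemma field_endo_qcomp:
  "(\<And>j. 1 \<le> j \<Longrightarrow> j \<le> i \<Longrightarrow> field_endo (q j)) \<Longrightarrow> field_endo (qcomp q i)"
  by (induction i) (simp_all add: field_endo_id field_endo_comp)

lemma qcomp_fixed: "(\<And>j. 1 \<le> j \<Longrightarrow> j \<le> i \<Longrightarrow> q j a = a) \<Longrightarrow> qcomp q i a = a"
  by (induction i) simp_all

lemma power_int_sum:
  fixes c :: "'a::field"
  assumes "c \<noteq> 0"
  shows "c powi (sum g A) = (\<Prod>i\<in>A. c powi g i)"
  by (induction A rule: infinite_finite_induct) (simp_all add: power_int_add assms)

lemma prod_power_int_distrib:
  fixes g :: "'b \<Rightarrow> 'a::field"
  shows "(prod g A) powi m = (\<Prod>i\<in>A. g i powi m)"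
  by (induction A rule: infinite_finite_induct) (simp_all add: power_int_mult_distrib)

lemma yhat_eq_ymon_xmon:
  fixes x y :: "nat \<Rightarrow> 'a::field"
  assumes x_nz: "\<And>j. j < n \<Longrightarrow> x j \<noteq> 0"
  shows "yhat n B x y a = (\<Prod>i<n. y i powi a i) * xmon n x (matvec n B a)"
proof -
  have "yhat n B x y a = (\<Prod>i<n. y i powi a i) * (\<Prod>i<n. \<Prod>j<n. x j powi (B j i * a i))"
    unfolding yhat_def
    by (simp add: power_int_mult_distrib prod_power_int_distrib power_int_mult prod.distrib)
  also have "(\<Prod>i<n. \<Prod>j<n. x j powi (B j i * a i)) = (\<Prod>j<n. \<Prod>i<n. x j powi (B j i * a i))"
    by (rule prod.swap)
  also have "\<dots> = xmon n x (matvec n B a)"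
    unfolding xmon_def matvec_def by (simp add: power_int_sum x_nz)
  finally show ?thesis .
qed

lemma (in field_endo) map_yhat:
  assumes x_nz: "\<And>i. i < n \<Longrightarrow> x i \<noteq> 0"
    and fix_y: "\<And>i. i < n \<Longrightarrow> f (y i) = y i"
    and map_xmon: "\<And>m. f (xmon n x m) = xmon n x m * P powi e m"
  shows "f (yhat n B x y a) = yhat n B x y a * P powi e (matvec n B a)"
proof -
  have "f (\<Prod>i<n. y i powi a i) = (\<Prod>i<n. y i powi a i)"
    by (simp add: map_prod map_power_int fix_y)
  then show ?thesis
    by (simp add: yhat_eq_ymon_xmon[OF x_nz] map_mult map_xmon mult.assoc)
qed

lemma length_Lseq: "length (Lseq n r B D0 x y z ii l) = l"
  by (induction l) (simp_all add: Let_def)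

lemma nth_Lseq: "1 \<le> j \<Longrightarrow> j \<le> l \<Longrightarrow> Lseq n r B D0 x y z ii l ! (j - 1) = Lval n r B D0 x y z ii j"
proof (induction l)
  case (Suc l)
  show ?case
  proof (cases "j = Suc l")
    case False
    then have "j - 1 < length (Lseq n r B D0 x y z ii l)"
      using Suc.prems by (simp add: length_Lseq)
    with False Suc show ?thesis by (simp add: Let_def nth_append)
  qed (simp add: Lval_def)
qed simp

lemma Lval_Suc: "Lval n r B D0 x y z ii (Suc l) =
  (\<Sum>s = 0..r (ii (Suc l)). z (ii (Suc l)) s *
      (yhat n B x y (cplus n r B ii (Suc l)) *
       (\<Prod>j\<in>{1..l}. Lval n r B D0 x y z ii j powi
          (- ipair n D0 r (matvec n B (cplus n r B ii (Suc l))) (ii j) (cvec r B ii j)))) ^ s)"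
proof -
  have "(\<Prod>j\<in>{1..l}. (Lseq n r B D0 x y z ii l ! (j - 1)) powi
          (- ipair n D0 r (matvec n B (cplus n r B ii (Suc l))) (ii j) (cvec r B ii j)))
      = (\<Prod>j\<in>{1..l}. Lval n r B D0 x y z ii j powi
          (- ipair n D0 r (matvec n B (cplus n r B ii (Suc l))) (ii j) (cvec r B ii j)))"
    using nth_Lseq[of _ l n r B D0 x y z ii] by (intro prod.cong) auto
  then show ?thesis
    unfolding Lval_def by (simp add: Let_def nth_append length_Lseq)
qed

lemma qcomp_yhat_cplus:
  fixes x y :: "nat \<Rightarrow> 'a::field" and z :: "nat \<Rightarrow> nat \<Rightarrow> 'a" and q :: "nat \<Rightarrow> 'a \<Rightarrow> 'a"
  assumes x_nz: "\<And>i. i < n \<Longrightarrow> x i \<noteq> 0"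
    and labels: "\<And>j. 1 \<le> j \<Longrightarrow> j \<le> k \<Longrightarrow> ii j < n"
    and endo: "\<And>j. 1 \<le> j \<Longrightarrow> j \<le> k \<Longrightarrow> field_endo (q j)"
    and q_y: "\<And>j i. 1 \<le> j \<Longrightarrow> j \<le> k \<Longrightarrow> i < n \<Longrightarrow> q j (y i) = y i"
    and q_z: "\<And>j i s. 1 \<le> j \<Longrightarrow> j \<le> k \<Longrightarrow> i < n \<Longrightarrow> q j (z i s) = z i s"
    and q_x: "\<And>j m. 1 \<le> j \<Longrightarrow> j \<le> k \<Longrightarrow>
       q j (xmon n x m) = xmon n x m *
         (\<Sum>s = 0..r (ii j). z (ii j) s * (yhat n B x y (cplus n r B ii j)) ^ s)
           powi (- ipair n D0 r m (ii j) (cvec r B ii j))"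
  shows "i \<le> m \<Longrightarrow> m \<le> k \<Longrightarrow>
     qcomp q i (yhat n B x y (cplus n r B ii m)) =
       yhat n B x y (cplus n r B ii m) *
       (\<Prod>j\<in>{1..i}. Lval n r B D0 x y z ii j powi
          (- ipair n D0 r (matvec n B (cplus n r B ii m)) (ii j) (cvec r B ii j)))"
proof (induction i arbitrary: m)
  case (Suc i)
  let ?Y = "\<lambda>m. yhat n B x y (cplus n r B ii m)"
  let ?e = "\<lambda>m j. - ipair n D0 r (matvec n B (cplus n r B ii m)) (ii j) (cvec r B ii j)"
  let ?P = "\<Sum>s = 0..r (ii (Suc i)). z (ii (Suc i)) s * ?Y (Suc i) ^ s"
  interpret Q: field_endo "qcomp q i"
    using endo Suc.prems by (intro field_endo_qcomp) simp
  interpret q: field_endo "q (Suc i)"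
    using endo Suc.prems by simp
  have q_Y: "q (Suc i) (?Y m) = ?Y m * ?P powi ?e m (Suc i)"
    using Suc.prems by (intro q.map_yhat) (simp_all add: x_nz q_y q_x)
  have "qcomp q i (z (ii (Suc i)) s) = z (ii (Suc i)) s" for s
    using Suc.prems by (intro qcomp_fixed) (simp add: q_z labels)
  then have Q_P: "qcomp q i ?P = Lval n r B D0 x y z ii (Suc i)"
    using Suc.prems by (simp add: Q.map_sum Q.map_mult Q.map_power Suc.IH Lval_Suc)
  have "qcomp q (Suc i) (?Y m) = qcomp q i (?Y m) * qcomp q i ?P powi ?e m (Suc i)"
    by (simp add: q_Y Q.map_mult Q.map_power_int)
  also have "\<dots> = ?Y m * (\<Prod>j\<in>{1..Suc i}. Lval n r B D0 x y z ii j powi ?e m j)"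
    using Suc.prems by (simp add: Suc.IH Q_P prod.cl_ivl_Suc mult.assoc)
  finally show ?case .
qed simp

theorem lemmaL3:
  fixes n k :: nat and r :: "nat \<Rightarrow> nat" and B :: "nat \<Rightarrow> nat \<Rightarrow> int" and D0 :: "nat \<Rightarrow> int"
    and ii :: "nat \<Rightarrow> nat"
    and x y :: "nat \<Rightarrow> 'a::field" and z :: "nat \<Rightarrow> nat \<Rightarrow> 'a"
    and q :: "nat \<Rightarrow> 'a \<Rightarrow> 'a"
  assumes n: "n \<ge> 1"
    and r_pos: "\<And>i. i < n \<Longrightarrow> r i > 0"
    and D0_pos: "\<And>i. i < n \<Longrightarrow> D0 i > 0"
    and skew: "\<And>i j. i < n \<Longrightarrow> j < n \<Longrightarrow> D0 i * int (r i) * B i j = - (D0 j * int (r j) * B j i)"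
    and path_labels: "\<And>j. 1 \<le> j \<Longrightarrow> j \<le> k \<Longrightarrow> ii j < n"
    and path_nobacktrack: "\<And>j. 1 \<le> j \<Longrightarrow> j < k \<Longrightarrow> ii j \<noteq> ii (Suc j)"
    and x_nz: "\<And>i. i < n \<Longrightarrow> x i \<noteq> 0"
    and y_nz: "\<And>i. i < n \<Longrightarrow> y i \<noteq> 0"
    and z_nz: "\<And>i s. i < n \<Longrightarrow> s \<le> r i \<Longrightarrow> z i s \<noteq> 0"
    and z_0: "\<And>i. i < n \<Longrightarrow> z i 0 = 1"
    and z_r: "\<And>i. i < n \<Longrightarrow> z i (r i) = 1"
    and z_sym: "\<And>i s. i < n \<Longrightarrow> s \<le> r i \<Longrightarrow> z i s = z i (r i - s)"
    and q_bij: "\<And>j. 1 \<le> j \<Longrightarrow> j \<le> k \<Longrightarrow> bij (q j)"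
    and q_add: "\<And>j a b. 1 \<le> j \<Longrightarrow> j \<le> k \<Longrightarrow> q j (a + b) = q j a + q j b"
    and q_mult: "\<And>j a b. 1 \<le> j \<Longrightarrow> j \<le> k \<Longrightarrow> q j (a * b) = q j a * q j b"
    and q_one: "\<And>j. 1 \<le> j \<Longrightarrow> j \<le> k \<Longrightarrow> q j 1 = 1"
    and q_y: "\<And>j i. 1 \<le> j \<Longrightarrow> j \<le> k \<Longrightarrow> i < n \<Longrightarrow> q j (y i) = y i"
    and q_z: "\<And>j i s. 1 \<le> j \<Longrightarrow> j \<le> k \<Longrightarrow> i < n \<Longrightarrow> q j (z i s) = z i s"
    and q_x: "\<And>j m. 1 \<le> j \<Longrightarrow> j \<le> k \<Longrightarrow>
       q j (xmon n x m) = xmon n x m *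
         (\<Sum>s = 0..r (ii j). z (ii j) s * (yhat n B x y (cplus n r B ii j)) ^ s)
           powi (- ipair n D0 r m (ii j) (cvec r B ii j))"
  shows "\<forall>i m. 1 \<le> i \<and> i \<le> m \<and> m \<le> k \<longrightarrow>
     qcomp q i (yhat n B x y (cplus n r B ii m)) =
       yhat n B x y (cplus n r B ii m) *
       (\<Prod>j\<in>{1..i}. Lval n r B D0 x y z ii j powi
          (- ipair n D0 r (matvec n B (cplus n r B ii m)) (ii j) (cvec r B ii j)))"
proof (intro allI impI)
  fix i m assume "1 \<le> i \<and> i \<le> m \<and> m \<le> k"
  moreover have "field_endo (q j)" if "1 \<le> j" "j \<le> k" for j
    using q_add[OF that] q_mult[OF that] q_one[OF that] by unfold_locales
  ultimately show "qcomp q i (yhat n B x y (cplus n r B ii m)) =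
       yhat n B x y (cplus n r B ii m) *
       (\<Prod>j\<in>{1..i}. Lval n r B D0 x y z ii j powi
          (- ipair n D0 r (matvec n B (cplus n r B ii m)) (ii j) (cvec r B ii j)))"
    by (intro qcomp_yhat_cplus[where k = k]) (simp_all add: x_nz path_labels q_y q_z q_x)
qed

end
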